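(* Let $\varepsilon>0$ and let $\varepsilon_1,\varepsilon_2>0$ be tolerances such that $mM\Lambda\varepsilon_2<1$ and $$\varepsilon_1+mM\Lambda_s\varepsilon_2+(C_0+\varepsilon_2)\big(mM\Lambda\varepsilon_1+m(\Lambda_s+\Lambda\varepsilon_1)\delta\big)\le \varepsilon,\qquad \delta:=\frac{M^2}{1-mM\Lambda\varepsilon_2}\,m\Lambda\varepsilon_2 .$$ Fix $w\in\mathbb{R}^m$ with $K_w\neq\emptyset$ and let $\hat u$ be produced by the algorithm described in the context with these tolerances (for any admissible choices of $\hat u_0$ and $\hat\phi_1,\dots,\hat\phi_m$). Then $\hat G$ is invertible and $$\|u-\hat u\|_{H^1(\Omega)}\le R(K_w)_{H^1(\Omega)}+\varepsilon\qquad\text{for every } u\in K_w .$$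
   Context: Let $\Omega\subset\mathbb{R}^d$, $d\in\{2,3\}$, be a bounded Lipschitz domain with boundary $\Gamma=\partial\Omega$; for $v\in H^1(\Omega)$ write $v_\Gamma$ for its trace. Fix $s>1/2$ and a Hilbert norm $\|\cdot\|_{H^s(\Gamma)}$ on the Sobolev space $H^s(\Gamma)$ (compactly embedded in $H^{1/2}(\Gamma)$). Let $\mathcal H^s(\Omega)$ be the Hilbert space of harmonic functions $v\in H^1(\Omega)$ with $v_\Gamma\in H^s(\Gamma)$, normed by $\|v\|_{\mathcal H^s(\Omega)}:=\|v_\Gamma\|_{H^s(\Gamma)}$, and let $C_s$ be a constant with $\|v\|_{H^1(\Omega)}\le C_s\|v\|_{\mathcal H^s(\Omega)}$ for all $v\in\mathcal H^s(\Omega)$. Fix $f\in H^{-1}(\Omega)$ and let $K:=\{u\in H^1(\Omega): -\Delta u=f \text{ in }\Omega,\ u_\Gamma=g \text{ for some } g\in H^s(\Gamma),\ \|g\|_{H^s(\Gamma)}\le 1\}$. Let $u_0\in H^1(\Omega)$ solve $-\Delta u_0=f$, $u_0|_\Gamma=0$. Let $\lambda_1,\dots,\lambda_m$ be continuous linear functionals on $H^1(\Omega)$ with $|\lambda_j(v)|\le\Lambda\|v\|_{H^1(\Omega)}$ for all $j$ and $v$, whose restrictions to $\mathcal H^s(\Omega)$ are linearly independent; set $\lambda(v):=(\lambda_1(v),\dots,\lambda_m(v))$ and $\Lambda_s:=C_s\Lambda$. Let $\phi_j\in\mathcal H^s(\Omega)$ be the Riesz representer of $\lambda_j$ in $\mathcal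 H^s(\Omega)$, i.e. $\lambda_j(v)=\langle v,\phi_j\rangle_{\mathcal H^s(\Omega)}$ for all $v\in\mathcal H^s(\Omega)$; let $G=(g_{i,j})$, $g_{i,j}:=\langle\phi_i,\phi_j\rangle_{\mathcal H^s(\Omega)}=\lambda_j(\phi_i)$, $M:=\|G^{-1}\|_1$ where $\|\cdot\|_1$ is the $\ell_1\to\ell_1$ operator norm, and $C_0:=\max_j\|\phi_j\|_{H^1(\Omega)}$. For $w\in\mathbb{R}^m$, $K_w:=\{u\in K:\lambda(u)=w\}$ and $R(K_w)_{H^1(\Omega)}$ is the radius of a smallest ball in $H^1(\Omega)$ containing $K_w$. On $\mathbb{R}^m$ use $\|z\|:=(\frac1m\sum_j z_j^2)^{1/2}$. Algorithm (given data $w$ and tolerances $\varepsilon_1,\varepsilon_2$): (1) choose any $\hat u_0\in H^1(\Omega)$ with $\|u_0-\hat u_0\|_{H^1(\Omega)}\le\varepsilon_1$ and set $\hat w:=w-\lambda(\hat u_0)$; (2) choose any $\hat\phi_j\in H^1(\Omega)$ with $\|\phi_j-\hat\phi_j\|_{H^1(\Omega)}\le\varepsilon_2$, $j=1,\dots,m$; (3) form $\hat G=(\hat g_{i,j})$, $\hat g_{i,j}:=\lambda_j(\hat\phi_i)$; (4) solve $\hat G\hat a=\hat w$ and set $\hat u:=\hat u_0+\sum_{j=1}^m\hat a_j\hat\phi_j$. *)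

theory Defs
  imports "HOL-Analysis.Analysis"
begin

text \<open>Abstract rendering of the PDE setting.
  'h : the Hilbert space H^1(Omega) (its norm is the H^1 norm);
  tr : the trace map H^1(Omega) to boundary functions 'b;
  lap : the map u to -Laplace(u), from H^1(Omega) into H^{-1}(Omega) ('d);
  Hs : the subspace H^s(Gamma) of boundary functions, with Hilbert inner product ipS.\<close>

definition snorm :: "('b \<Rightarrow> 'b \<Rightarrow> real) \<Rightarrow> 'b \<Rightarrow> real" where
  "snorm ipS g = sqrt (ipS g g)"

definition harm_space :: "('h \<Rightarrow> 'd::zero) \<Rightarrow> ('h \<Rightarrow> 'b) \<Rightarrow> 'b set \<Rightarrow> 'h set" where
  "harm_space lap tr Hs = {v. lap v = 0 \<and> tr v \<in> Hs}"

definition Kset :: "('h \<Rightarrow> 'd) \<Rightarrow> ('h \<Rightarrow> 'b) \<Rightarrow> 'b set \<Rightarrow> ('b \<Rightarrow> 'b \<Rightarrow> real) \<Rightarrow> 'd \<Rightarrow> 'h set" where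
  "Kset lap tr Hs ipS f = {u. lap u = f \<and> (\<exists>g\<in>Hs. tr u = g \<and> snorm ipS g \<le> 1)}"

definition cheb_radius :: "'a::metric_space set \<Rightarrow> real" where
  "cheb_radius S = Inf {r. \<exists>c. S \<subseteq> cball c r}"

definition l1n :: "real^'n \<Rightarrow> real" where
  "l1n x = (\<Sum>i\<in>UNIV. \<bar>x $ i\<bar>)"

definition l1_opnorm :: "real^'n^'m \<Rightarrow> real" where
  "l1_opnorm A = Sup {l1n (A *v x) | x. l1n x \<le> 1}"

end

theory Submission
  imports Defs
begin

text \<open>Let \<open>u* = u0 + (\<Sum>j. a*_j \<phi>_j)\<close> with \<open>G a* = w - \<lambda>(u0)\<close>. The harmonic part \<open>u* - u0\<close> is
  the orthogonal projection, for the trace inner product, of \<open>u - u0\<close> onto the span of the Riesz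
  representers, for every \<open>u \<in> K_w\<close>. Hence the reflection \<open>2 u* - u\<close> has the same data and the
  same trace norm as \<open>u\<close>, so \<open>K_w\<close> is symmetric about \<open>u*\<close>, and a set symmetric about a point
  lies within its Chebyshev radius of that point. It remains to see that the computed function is
  \<open>\<epsilon>\<close>-close to \<open>u*\<close>: the entries of the computed Gram matrix are within \<open>\<Lambda>\<epsilon>\<^sub>2\<close> of those of
  \<open>G\<close>, so for \<open>mM\<Lambda>\<epsilon>\<^sub>2 < 1\<close> the usual \<open>\<ell>\<^sub>1\<close> perturbation argument for linear systems gives
  invertibility and bounds the coefficient error, and \<open>\<delta>\<close> is exactly the resulting bound.\<close>

lemma l1n_nonneg: "0 \<le> l1n x"
  unfolding l1n_def by (simp add: sum_nonneg)

lemma l1n_0 [simp]: "l1n 0 = 0"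
  by (simp add: l1n_def)

lemma abs_nth_le_l1n: "\<bar>x $ j\<bar> \<le> l1n x"
  unfolding l1n_def by (rule member_le_sum) auto

lemma l1n_eq_0_iff: "l1n x = 0 \<longleftrightarrow> x = 0"
proof
  assume "l1n x = 0"
  then show "x = 0" using abs_nth_le_l1n[of x] by (simp add: vec_eq_iff)
qed simp

lemma l1n_pos: "x \<noteq> 0 \<Longrightarrow> 0 < l1n x"
  using l1n_nonneg l1n_eq_0_iff by (metis order_le_less)

lemma l1n_triangle: "l1n (x + y) \<le> l1n x + l1n y"
  unfolding l1n_def by (simp add: sum.distrib[symmetric] sum_mono abs_triangle_ineq)

lemma l1n_minus [simp]: "l1n (- x) = l1n x"
  by (simp add: l1n_def)

lemma l1n_diff_le: "l1n (x - y) \<le> l1n x + l1n y"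
  using l1n_triangle[of x "- y"] by simp

lemma l1n_scale: "l1n (c *s x) = \<bar>c\<bar> * l1n x"
  unfolding l1n_def by (simp add: abs_mult sum_distrib_left)

lemma l1n_le_card_mult:
  assumes "\<And>j. \<bar>x $ j\<bar> \<le> B"
  shows "l1n (x :: real^'n) \<le> real CARD('n) * B"
proof -
  have "l1n x \<le> (\<Sum>j\<in>(UNIV::'n set). B)"
    unfolding l1n_def by (intro sum_mono assms)
  then show ?thesis by simp
qed

lemma l1n_matrix_vector_mult_le:
  fixes A :: "real^'n^'m"
  assumes "\<And>i j. \<bar>A $ i $ j\<bar> \<le> B"
  shows "l1n (A *v x) \<le> real CARD('m) * B * l1n x"
proof -
  have "l1n (A *v x) = (\<Sum>i\<in>UNIV. \<bar>\<Sum>j\<in>UNIV. A $ i $ j * x $ j\<bar>)"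
    by (simp add: l1n_def matrix_vector_mult_def)
  also have "\<dots> \<le> (\<Sum>i\<in>(UNIV::'m set). \<Sum>j\<in>UNIV. B * \<bar>x $ j\<bar>)"
  proof (intro sum_mono)
    fix i
    have "\<bar>\<Sum>j\<in>UNIV. A $ i $ j * x $ j\<bar> \<le> (\<Sum>j\<in>UNIV. \<bar>A $ i $ j * x $ j\<bar>)"
      by (rule sum_abs)
    also have "\<dots> \<le> (\<Sum>j\<in>UNIV. B * \<bar>x $ j\<bar>)"
      by (intro sum_mono) (simp add: abs_mult assms mult_right_mono)
    finally show "\<bar>\<Sum>j\<in>UNIV. A $ i $ j * x $ j\<bar> \<le> (\<Sum>j\<in>UNIV. B * \<bar>x $ j\<bar>)" .
  qed
  also have "\<dots> = real CARD('m) * B * l1n x"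
    by (simp add: l1n_def sum_distrib_left mult.assoc)
  finally show ?thesis .
qed

lemma bdd_above_l1_opnorm:
  fixes A :: "real^'n^'m"
  shows "bdd_above {l1n (A *v x) | x. l1n x \<le> 1}"
proof -
  define B where "B = (\<Sum>i\<in>UNIV. \<Sum>j\<in>UNIV. \<bar>A $ i $ j\<bar>)"
  have entry: "\<bar>A $ i $ j\<bar> \<le> B" for i j
  proof -
    have "\<bar>A $ i $ j\<bar> \<le> (\<Sum>j\<in>UNIV. \<bar>A $ i $ j\<bar>)" by (rule member_le_sum) auto
    also have "\<dots> \<le> B" unfolding B_def by (rule member_le_sum) (auto simp: sum_nonneg)
    finally show ?thesis .
  qed
  then have "0 \<le> B" by (meson abs_ge_zero order_trans)
  have "l1n (A *v x) \<le> real CARD('m) * B" if "l1n x \<le> 1" for x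
  proof -
    have "l1n (A *v x) \<le> real CARD('m) * B * l1n x"
      using entry by (rule l1n_matrix_vector_mult_le)
    also have "\<dots> \<le> real CARD('m) * B"
      using mult_left_mono[OF that, of "real CARD('m) * B"] \<open>0 \<le> B\<close> by simp
    finally show ?thesis .
  qed
  then show ?thesis by (intro bdd_aboveI) blast
qed

lemma l1n_le_l1_opnorm: "l1n (A *v x) \<le> l1_opnorm A * l1n x"
proof (cases "x = 0")
  case True
  then show ?thesis by simp
next
  case False
  then have N: "0 < l1n x" using l1n_pos by blast
  define y where "y = (1 / l1n x) *s x"
  have "l1n y = 1" using N by (simp add: y_def l1n_scale)
  then have "l1n (A *v y) \<le> l1_opnorm A"
    unfolding l1_opnorm_def by (intro cSup_upper bdd_above_l1_opnorm) auto
  moreover have "A *v y = (1 / l1n x) *s (A *v x)"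
    by (simp add: y_def vec_eq_iff matrix_vector_mult_def sum_distrib_left mult_ac)
  ultimately have "l1n (A *v x) / l1n x \<le> l1_opnorm A"
    using N by (simp add: l1n_scale)
  then show ?thesis using N by (simp add: divide_le_eq mult.commute)
qed

lemma l1_opnorm_nonneg: "0 \<le> l1_opnorm (A :: real^'n^'m)"
proof -
  let ?e = "axis undefined 1 :: real^'n"
  have pos: "0 < l1n ?e" by (rule l1n_pos) (simp add: axis_eq_0_iff)
  have "0 \<le> l1_opnorm A * l1n ?e"
    using l1n_nonneg[of "A *v ?e"] l1n_le_l1_opnorm[of A ?e] by linarith
  then show ?thesis using pos by (simp add: zero_le_mult_iff)
qed

lemma matrix_inv_inverse:
  assumes "invertible (A :: real^'n^'n)"
  shows "matrix_inv A ** A = mat 1" and "A ** matrix_inv A = mat 1"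
  using someI_ex[OF assms[unfolded invertible_def]] by (simp_all add: matrix_inv_def)

lemma l1n_le_l1_opnorm_inv:
  assumes "invertible (G :: real^'n^'n)"
  shows "l1n x \<le> l1_opnorm (matrix_inv G) * l1n (G *v x)"
  using l1n_le_l1_opnorm[of "matrix_inv G" "G *v x"]
  by (simp add: matrix_vector_mul_assoc matrix_inv_inverse(1)[OF assms])

lemma l1n_perturbed_solution:
  fixes G Ghat :: "real^'n^'n"
  assumes stable: "\<And>x. l1n x \<le> M * l1n (G *v x)" and "0 \<le> M"
    and close: "\<And>x. l1n ((Ghat - G) *v x) \<le> e * l1n x"
    and "G *v a0 = b0" and "Ghat *v a = b"
  shows "(1 - M * e) * l1n (a - a0) \<le> M * (l1n (b - b0) + e * l1n a0)"
proof -
  let ?E = "Ghat - G"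
  have eq: "G *v (a - a0) = (b - b0) - ?E *v a0 - ?E *v (a - a0)"
    using assms(4,5)
    by (simp add: matrix_vector_mult_diff_rdistrib matrix_vector_mult_diff_distrib)
  have "l1n (G *v (a - a0)) \<le> l1n (b - b0) + e * l1n a0 + e * l1n (a - a0)"
    using l1n_diff_le[of "b - b0 - ?E *v a0" "?E *v (a - a0)"] l1n_diff_le[of "b - b0" "?E *v a0"]
      close[of a0] close[of "a - a0"]
    unfolding eq by linarith
  then have "l1n (a - a0) \<le> M * (l1n (b - b0) + e * l1n a0 + e * l1n (a - a0))"
    using stable[of "a - a0"] mult_left_mono[OF _ \<open>0 \<le> M\<close>] by (meson order_trans)
  then show ?thesis by (simp add: algebra_simps)
qed

lemma invertible_perturbed:
  fixes G Ghat :: "real^'n^'n"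
  assumes stable: "\<And>x. l1n x \<le> M * l1n (G *v x)" and "0 \<le> M"
    and close: "\<And>x. l1n ((Ghat - G) *v x) \<le> e * l1n x"
    and "M * e < 1"
  shows "invertible Ghat"
proof -
  have "x = 0" if "Ghat *v x = 0" for x
  proof -
    have "(1 - M * e) * l1n x \<le> 0"
      using l1n_perturbed_solution[OF stable \<open>0 \<le> M\<close> close, of 0 0 x 0] that by simp
    then have "l1n x \<le> 0" using \<open>M * e < 1\<close> by (simp add: mult_le_0_iff)
    then show "x = 0" using l1n_nonneg l1n_eq_0_iff by (metis order_antisym)
  qed
  then show ?thesis by (simp add: invertible_left_inverse matrix_left_invertible_ker)
qed

lemma norm_expansion_diff_le:
  fixes phi phihat :: "'m::finite \<Rightarrow> 'a::real_normed_vector"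
  assumes "norm (u - uhat) \<le> e1"
    and "\<And>j. norm (phi j - phihat j) \<le> e2" and "\<And>j. norm (phihat j) \<le> C"
  shows "norm ((u + (\<Sum>j\<in>UNIV. a0 $ j *\<^sub>R phi j)) - (uhat + (\<Sum>j\<in>UNIV. a $ j *\<^sub>R phihat j)))
           \<le> e1 + e2 * l1n a0 + C * l1n (a - a0)"
proof -
  have split: "(u + (\<Sum>j\<in>UNIV. a0 $ j *\<^sub>R phi j)) - (uhat + (\<Sum>j\<in>UNIV. a $ j *\<^sub>R phihat j))
      = (u - uhat) + (\<Sum>j\<in>UNIV. a0 $ j *\<^sub>R (phi j - phihat j) - (a - a0) $ j *\<^sub>R phihat j)"
    by (simp add: sum_subtractf scaleR_diff_right scaleR_diff_left algebra_simps)
  have each: "norm (a0 $ j *\<^sub>R (phi j - phihat j) - (a - a0) $ j *\<^sub>R phihat j)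
      \<le> e2 * \<bar>a0 $ j\<bar> + C * \<bar>(a - a0) $ j\<bar>" for j
  proof -
    have "norm (a0 $ j *\<^sub>R (phi j - phihat j) - (a - a0) $ j *\<^sub>R phihat j)
        \<le> \<bar>a0 $ j\<bar> * norm (phi j - phihat j) + \<bar>(a - a0) $ j\<bar> * norm (phihat j)"
      using norm_triangle_ineq4 by (metis norm_scaleR)
    also have "\<dots> \<le> \<bar>a0 $ j\<bar> * e2 + \<bar>(a - a0) $ j\<bar> * C"
      using assms(2,3) by (intro add_mono mult_left_mono) auto
    finally show ?thesis by (simp add: mult.commute)
  qed
  have "norm ((u - uhat) + (\<Sum>j\<in>UNIV. a0 $ j *\<^sub>R (phi j - phihat j) - (a - a0) $ j *\<^sub>R phihat j))
      \<le> norm (u - uhat) + (\<Sum>j\<in>UNIV. norm (a0 $ j *\<^sub>R (phi j - phihat j) - (a - a0) $ j *\<^sub>R phihat j))"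
    by (rule order_trans[OF norm_triangle_ineq add_left_mono[OF norm_sum]])
  also have "\<dots> \<le> e1 + (\<Sum>j\<in>UNIV. e2 * \<bar>a0 $ j\<bar> + C * \<bar>(a - a0) $ j\<bar>)"
    by (intro add_mono assms(1) sum_mono each)
  also have "\<dots> = e1 + e2 * l1n a0 + C * l1n (a - a0)"
    by (simp add: l1n_def sum.distrib sum_distrib_left)
  finally show ?thesis unfolding split .
qed

lemma recovery_tolerance:
  fixes M m Lam Lams eps eps1 eps2 C0 delta A D :: real
  defines "k \<equiv> m * M * Lam * eps2"
  assumes "0 \<le> M" "0 \<le> m" "0 \<le> Lam" "0 \<le> eps2" "0 \<le> C0" "k < 1"
    and A: "A \<le> M * (m * Lams)"
    and D: "(1 - k) * D \<le> M * (m * Lam * eps1 + m * Lam * eps2 * A)"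
    and delta: "delta = M\<^sup>2 / (1 - k) * (m * Lam * eps2)"
    and tol: "eps1 + m * M * Lams * eps2
              + (C0 + eps2) * (m * M * Lam * eps1 + m * (Lams + Lam * eps1) * delta) \<le> eps"
  shows "eps1 + eps2 * A + (C0 + eps2) * D \<le> eps"
proof -
  define T where "T = m * M * Lam * eps1 + m * (Lams + Lam * eps1) * delta"
  have "0 \<le> k" unfolding k_def using assms(2-5) by simp
  \<comment> \<open>the coefficient of \<open>delta\<close> is chosen so that \<open>(1 - k) * delta = M * k\<close>\<close>
  have "(1 - k) * T = m * M * Lam * eps1 + k * (M * (m * Lams))"
    using \<open>k < 1\<close> unfolding T_def delta k_def by (simp add: power2_eq_square field_simps)
  moreover have "(1 - k) * D \<le> m * M * Lam * eps1 + k * (M * (m * Lams))"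
    using D mult_left_mono[OF A \<open>0 \<le> k\<close>] unfolding k_def by (simp add: algebra_simps)
  ultimately have "(1 - k) * D \<le> (1 - k) * T" by simp
  then have "D \<le> T" using \<open>k < 1\<close> by (simp add: mult_le_cancel_left_pos)
  moreover have "eps2 * A \<le> m * M * Lams * eps2"
    using mult_left_mono[OF A \<open>0 \<le> eps2\<close>] by (simp add: mult_ac)
  ultimately show ?thesis
    using tol mult_left_mono[OF \<open>D \<le> T\<close>, of "C0 + eps2"] assms(5,6) unfolding T_def by linarith
qed

lemma l1n_gram_perturbation:
  fixes lam :: "'m::finite \<Rightarrow> 'a::real_normed_vector \<Rightarrow> real" and G Ghat :: "real^'m^'m"
  assumes lam: "\<And>j. linear (lam j)" "\<And>j v. \<bar>lam j v\<bar> \<le> Lam * norm v" "0 \<le> Lam"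
    and G: "\<And>i j. G $ i $ j = lam j (phi i)" and Ghat: "\<And>i j. Ghat $ i $ j = lam j (phihat i)"
    and close: "\<And>j. norm (phi j - phihat j) \<le> e"
  shows "l1n ((Ghat - G) *v x) \<le> real CARD('m) * Lam * e * l1n x"
proof -
  have "\<bar>(Ghat - G) $ i $ j\<bar> \<le> Lam * e" for i j
  proof -
    have "\<bar>(Ghat - G) $ i $ j\<bar> = \<bar>lam j (phihat i - phi i)\<bar>"
      by (simp add: G Ghat linear_diff[OF lam(1)])
    also have "\<dots> \<le> Lam * norm (phi i - phihat i)"
      using lam(2) by (metis norm_minus_commute)
    also have "\<dots> \<le> Lam * e" using close lam(3) by (rule mult_left_mono)
    finally show ?thesis .
  qed
  then show ?thesis using l1n_matrix_vector_mult_le by (metis mult.assoc)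
qed

lemma perturbed_interpolant_error:
  fixes lam :: "'m::finite \<Rightarrow> 'a::real_normed_vector \<Rightarrow> real" and phi phihat :: "'m \<Rightarrow> 'a"
    and G Ghat :: "real^'m^'m"
  defines "m \<equiv> real CARD('m)"
  assumes lam: "\<And>j. linear (lam j)" "\<And>j v. \<bar>lam j v\<bar> \<le> Lam * norm v" "0 \<le> Lam"
    and G: "\<And>i j. G $ i $ j = lam j (phi i)" and Ghat: "\<And>i j. Ghat $ i $ j = lam j (phihat i)"
    and stable: "\<And>x. l1n x \<le> M * l1n (G *v x)" "0 \<le> M"
    and a0: "G *v a0 = w - (\<chi> j. lam j u0)" "l1n a0 \<le> M * (m * Lams)"
    and a: "Ghat *v a = w - (\<chi> j. lam j u0hat)"
    and u0hat: "norm (u0 - u0hat) \<le> eps1"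
    and phihat: "\<And>j. norm (phi j - phihat j) \<le> eps2" and C0: "\<And>j. norm (phi j) \<le> C0"
    and "0 \<le> eps2" and small: "m * M * Lam * eps2 < 1"
    and delta: "delta = M\<^sup>2 / (1 - m * M * Lam * eps2) * (m * Lam * eps2)"
    and tol: "eps1 + m * M * Lams * eps2
              + (C0 + eps2) * (m * M * Lam * eps1 + m * (Lams + Lam * eps1) * delta) \<le> eps"
  shows "norm ((u0 + (\<Sum>j\<in>UNIV. a0 $ j *\<^sub>R phi j)) - (u0hat + (\<Sum>j\<in>UNIV. a $ j *\<^sub>R phihat j)))
           \<le> eps"
proof -
  have "\<bar>(w - (\<chi> j. lam j u0hat) - (w - (\<chi> j. lam j u0))) $ j\<bar> \<le> Lam * eps1" for j
    using lam(2)[of j "u0 - u0hat"] mult_left_mono[OF u0hat lam(3)]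
    by (simp add: linear_diff[OF lam(1)])
  then have data: "l1n (w - (\<chi> j. lam j u0hat) - (w - (\<chi> j. lam j u0))) \<le> m * (Lam * eps1)"
    unfolding m_def by (rule l1n_le_card_mult)
  have "(1 - M * (m * Lam * eps2)) * l1n (a - a0)
      \<le> M * (l1n (w - (\<chi> j. lam j u0hat) - (w - (\<chi> j. lam j u0))) + m * Lam * eps2 * l1n a0)"
    using l1n_perturbed_solution[OF stable l1n_gram_perturbation[OF lam G Ghat phihat] a0(1) a]
    by (simp add: m_def)
  then have D: "(1 - m * M * Lam * eps2) * l1n (a - a0)
      \<le> M * (m * Lam * eps1 + m * Lam * eps2 * l1n a0)"
    using mult_left_mono[OF data stable(2)] by (simp add: algebra_simps)
  have phihat_norm: "norm (phihat j) \<le> C0 + eps2" for j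
    using norm_triangle_ineq4[of "phi j" "phi j - phihat j"] C0[of j] phihat[of j] by simp
  have "0 \<le> C0" using C0 norm_ge_zero order_trans by blast
  have "norm ((u0 + (\<Sum>j\<in>UNIV. a0 $ j *\<^sub>R phi j)) - (u0hat + (\<Sum>j\<in>UNIV. a $ j *\<^sub>R phihat j)))
      \<le> eps1 + eps2 * l1n a0 + (C0 + eps2) * l1n (a - a0)"
    by (rule norm_expansion_diff_le[OF u0hat phihat phihat_norm])
  also have "\<dots> \<le> eps"
    using recovery_tolerance[OF stable(2) _ lam(3) \<open>0 \<le> eps2\<close> \<open>0 \<le> C0\<close> small a0(2) D delta tol]
    by (simp add: m_def)
  finally show ?thesis .
qed

lemma dist_le_cheb_radius_if_symmetric:
  fixes S :: "'a::real_normed_vector set"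
  assumes "bounded S" and symmetric: "\<And>v. v \<in> S \<Longrightarrow> 2 *\<^sub>R c - v \<in> S" and "u \<in> S"
  shows "dist u c \<le> cheb_radius S"
  unfolding cheb_radius_def
proof (rule cInf_greatest)
  show "{r. \<exists>z. S \<subseteq> cball z r} \<noteq> {}"
    using \<open>bounded S\<close> by (auto simp: bounded_subset_cball)
next
  fix r assume "r \<in> {r. \<exists>z. S \<subseteq> cball z r}"
  then obtain z where z: "S \<subseteq> cball z r" by blast
  have "(u - z) - ((2 *\<^sub>R c - u) - z) = 2 *\<^sub>R (u - c)"
    by (simp add: scaleR_2 algebra_simps)
  then have "2 * dist u c = norm ((u - z) - ((2 *\<^sub>R c - u) - z))"
    by (simp add: dist_norm)
  also have "\<dots> \<le> dist u z + dist (2 *\<^sub>R c - u) z"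
    unfolding dist_norm by (rule norm_triangle_ineq4)
  also have "\<dots> \<le> 2 * r"
    using subsetD[OF z \<open>u \<in> S\<close>] subsetD[OF z symmetric[OF \<open>u \<in> S\<close>]]
    by (simp add: dist_commute)
  finally show "dist u c \<le> r" by simp
qed

locale inner_product_on =
  fixes H :: "'b::real_vector set" and ip :: "'b \<Rightarrow> 'b \<Rightarrow> real"
  assumes subspace: "subspace H"
    and sym: "\<And>g h. g \<in> H \<Longrightarrow> h \<in> H \<Longrightarrow> ip g h = ip h g"
    and add_left: "\<And>g h k. g \<in> H \<Longrightarrow> h \<in> H \<Longrightarrow> k \<in> H \<Longrightarrow> ip (g + h) k = ip g k + ip h k"
    and scale_left: "\<And>g h c. g \<in> H \<Longrightarrow> h \<in> H \<Longrightarrow> ip (c *\<^sub>R g) h = c * ip g h"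
    and nonneg: "\<And>g. g \<in> H \<Longrightarrow> 0 \<le> ip g g"
    and definite: "\<And>g. g \<in> H \<Longrightarrow> ip g g = 0 \<Longrightarrow> g = 0"
begin

lemma zero_left: "k \<in> H \<Longrightarrow> ip 0 k = 0"
  using scale_left[of 0 k 0] subspace by (simp add: subspace_0)

lemma diff_left:
  assumes "g \<in> H" "h \<in> H" "k \<in> H"
  shows "ip (g - h) k = ip g k - ip h k"
  using add_left[of g "(-1) *\<^sub>R h" k] scale_left[of h k "-1"] assms subspace
  by (simp add: subspace_neg)

lemma sum_left:
  assumes "\<And>j. j \<in> F \<Longrightarrow> g j \<in> H" and "k \<in> H"
  shows "ip (\<Sum>j\<in>F. c j *\<^sub>R g j) k = (\<Sum>j\<in>F. c j * ip (g j) k)"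
  using assms(1)
proof (induction F rule: infinite_finite_induct)
  case (insert x F)
  have "(\<Sum>j\<in>F. c j *\<^sub>R g j) \<in> H"
    using insert.prems subspace by (auto intro!: subspace_sum subspace_scale)
  then show ?case
    using insert subspace assms(2) by (simp add: add_left scale_left subspace_scale)
qed (use assms(2) zero_left in auto)

lemma reflection_norm_eq:
  assumes "p \<in> H" "q \<in> H" and "ip p q = ip p p"
  shows "ip (2 *\<^sub>R p - q) (2 *\<^sub>R p - q) = ip q q"
proof -
  have r: "2 *\<^sub>R p - q \<in> H" and p2: "2 *\<^sub>R p \<in> H"
    using assms subspace by (simp_all add: subspace_diff subspace_scale)
  have expand: "ip (2 *\<^sub>R p - q) k = 2 * ip p k - ip q k" if "k \<in> H" for k
    using diff_left[OF p2 \<open>q \<in> H\<close> that] scale_left[OF \<open>p \<in> H\<close> that] by simp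
  show ?thesis
    using expand[OF r] expand[OF \<open>p \<in> H\<close>] expand[OF \<open>q \<in> H\<close>] sym[OF r \<open>p \<in> H\<close>]
      sym[OF r \<open>q \<in> H\<close>] sym[OF \<open>p \<in> H\<close> \<open>q \<in> H\<close>] assms(3)
    by simp
qed

end

locale harmonic_recovery = inner_product_on Hs ipS
  for Hs :: "'b::real_vector set" and ipS +
  fixes lap :: "'h::real_normed_vector \<Rightarrow> 'd::real_vector"
    and tr :: "'h \<Rightarrow> 'b"
    and lam :: "'m::finite \<Rightarrow> 'h \<Rightarrow> real"
    and phi :: "'m \<Rightarrow> 'h"
  assumes lap_linear: "linear lap" and tr_linear: "linear tr"
    and lam_linear: "\<And>j. linear (lam j)"
    and phi_harmonic: "\<And>j. phi j \<in> harm_space lap tr Hs"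
    and riesz: "\<And>j v. v \<in> harm_space lap tr Hs \<Longrightarrow> lam j v = ipS (tr v) (tr (phi j))"
    and lam_independent:
      "\<And>c. \<forall>v\<in>harm_space lap tr Hs. (\<Sum>j\<in>UNIV. c $ j * lam j v) = 0 \<Longrightarrow> c = 0"
begin

abbreviation harmonics :: "'h set" where "harmonics \<equiv> harm_space lap tr Hs"

definition gram :: "real^'m^'m" where
  "gram = (\<chi> i j. ipS (tr (phi i)) (tr (phi j)))"

definition phi_comb :: "real^'m \<Rightarrow> 'h" where
  "phi_comb c = (\<Sum>j\<in>UNIV. c $ j *\<^sub>R phi j)"

definition recovery_set :: "'d \<Rightarrow> real^'m \<Rightarrow> 'h set" where
  "recovery_set f w = {u \<in> Kset lap tr Hs ipS f. (\<chi> j. lam j u) = w}"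

lemma mem_harmonics_iff: "v \<in> harmonics \<longleftrightarrow> lap v = 0 \<and> tr v \<in> Hs"
  by (simp add: harm_space_def)

lemma trace_phi: "tr (phi j) \<in> Hs"
  using phi_harmonic mem_harmonics_iff by blast

lemma gram_nth: "gram $ i $ j = lam j (phi i)"
  by (simp add: gram_def riesz[OF phi_harmonic])

lemma trace_phi_comb: "tr (phi_comb c) = (\<Sum>j\<in>UNIV. c $ j *\<^sub>R tr (phi j))"
  by (simp add: phi_comb_def linear_sum[OF tr_linear] linear_scale[OF tr_linear])

lemma phi_comb_harmonic: "phi_comb c \<in> harmonics"
proof -
  have "lap (phi_comb c) = 0"
    using phi_harmonic by (simp add: phi_comb_def mem_harmonics_iff linear_sum[OF lap_linear]
        linear_scale[OF lap_linear])
  moreover have "tr (phi_comb c) \<in> Hs"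
    unfolding trace_phi_comb using subspace trace_phi by (intro subspace_sum subspace_scale) auto
  ultimately show ?thesis by (simp add: mem_harmonics_iff)
qed

lemma ipS_trace_phi_comb:
  assumes "v \<in> harmonics"
  shows "ipS (tr (phi_comb c)) (tr v) = (\<Sum>j\<in>UNIV. c $ j * lam j v)"
proof -
  have "tr v \<in> Hs" using assms mem_harmonics_iff by blast
  then show ?thesis
    unfolding trace_phi_comb
    by (simp add: sum_left trace_phi riesz[OF assms] sym[OF trace_phi])
qed

lemma lam_phi_comb: "lam i (phi_comb c) = (gram *v c) $ i"
proof -
  have "lam i (phi_comb c) = (\<Sum>j\<in>UNIV. c $ j * lam j (phi i))"
    by (simp add: riesz[OF phi_comb_harmonic] ipS_trace_phi_comb[OF phi_harmonic])
  also have "\<dots> = (gram *v c) $ i"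
    by (simp add: gram_nth matrix_vector_mult_def mult.commute)
  finally show ?thesis .
qed

lemma gram_invertible: "invertible gram"
proof -
  have "c = 0" if "gram *v c = 0" for c
  proof -
    have "ipS (tr (phi_comb c)) (tr (phi_comb c)) = 0"
      using that by (simp add: ipS_trace_phi_comb[OF phi_comb_harmonic] lam_phi_comb)
    then have "tr (phi_comb c) = 0"
      using definite phi_comb_harmonic mem_harmonics_iff by blast
    have "(\<Sum>j\<in>UNIV. c $ j * lam j v) = 0" if "v \<in> harmonics" for v
    proof -
      have "(\<Sum>j\<in>UNIV. c $ j * lam j v) = ipS (tr (phi_comb c)) (tr v)"
        using ipS_trace_phi_comb[OF that] by simp
      then show ?thesis
        using \<open>tr (phi_comb c) = 0\<close> zero_left that mem_harmonics_iff by simp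
    qed
    then show "c = 0" using lam_independent by blast
  qed
  then show ?thesis by (simp add: invertible_left_inverse matrix_left_invertible_ker)
qed

lemma exists_harmonic_lam_nonzero: "\<exists>v\<in>harmonics. \<exists>j. lam j v \<noteq> 0"
proof (rule ccontr)
  assume "\<not> ?thesis"
  then have "(\<chi> j. 1) = (0 :: real^'m)"
    by (intro lam_independent) simp
  then show False by (simp add: vec_eq_iff)
qed

lemma recovery_set_iff:
  assumes "lap u0 = f" "tr u0 = 0"
  shows "u \<in> recovery_set f w \<longleftrightarrow>
    u - u0 \<in> harmonics \<and> snorm ipS (tr (u - u0)) \<le> 1 \<and>
    (\<forall>j. lam j (u - u0) = (w - (\<chi> j. lam j u0)) $ j)"
  using assms
  by (auto simp: recovery_set_def Kset_def mem_harmonics_iff vec_eq_iff linear_diff[OF lap_linear]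
      linear_diff[OF tr_linear] linear_diff[OF lam_linear])

lemma recovery_set_symmetric:
  assumes "lap u0 = f" "tr u0 = 0" and a: "gram *v a = w - (\<chi> j. lam j u0)"
    and u: "u \<in> recovery_set f w"
  shows "2 *\<^sub>R (u0 + phi_comb a) - u \<in> recovery_set f w"
proof -
  define v where "v = u - u0"
  have v: "v \<in> harmonics" "snorm ipS (tr v) \<le> 1" "\<And>j. lam j v = (gram *v a) $ j"
    using u unfolding v_def recovery_set_iff[OF assms(1,2)] a by auto
  define v' where "v' = 2 *\<^sub>R phi_comb a - v"
  have "2 *\<^sub>R (u0 + phi_comb a) - u - u0 = v'"
    by (simp add: v'_def v_def scaleR_2 algebra_simps)
  moreover have "v' \<in> harmonics"
    using v(1) phi_comb_harmonic mem_harmonics_iff subspace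
    by (simp add: v'_def linear_diff[OF lap_linear] linear_scale[OF lap_linear]
        linear_diff[OF tr_linear] linear_scale[OF tr_linear] subspace_diff subspace_scale)
  moreover have "lam j v' = (gram *v a) $ j" for j
    using v(3) by (simp add: v'_def linear_diff[OF lam_linear] linear_scale[OF lam_linear] lam_phi_comb)
  moreover have "snorm ipS (tr v') \<le> 1"
  proof -
    \<comment> \<open>\<open>phi_comb a\<close> is the orthogonal projection of \<open>v\<close> onto the span of the representers\<close>
    have "ipS (tr (phi_comb a)) (tr v) = ipS (tr (phi_comb a)) (tr (phi_comb a))"
      using v(3)
      by (simp add: ipS_trace_phi_comb[OF v(1)] ipS_trace_phi_comb[OF phi_comb_harmonic] lam_phi_comb)
    then have "ipS (tr v') (tr v') = ipS (tr v) (tr v)"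
      using reflection_norm_eq[of "tr (phi_comb a)" "tr v"] phi_comb_harmonic v(1) mem_harmonics_iff
      by (simp add: v'_def linear_diff[OF tr_linear] linear_scale[OF tr_linear])
    then show ?thesis using v(2) by (simp add: snorm_def)
  qed
  ultimately show ?thesis
    using a by (simp add: recovery_set_iff[OF assms(1,2)])
qed

lemma recovery_set_subset_cball:
  assumes "lap u0 = f" "tr u0 = 0"
    and Cs: "\<And>v. v \<in> harmonics \<Longrightarrow> norm v \<le> Cs * snorm ipS (tr v)"
  shows "recovery_set f w \<subseteq> cball u0 \<bar>Cs\<bar>"
proof
  fix u assume "u \<in> recovery_set f w"
  then have "u - u0 \<in> harmonics" "snorm ipS (tr (u - u0)) \<le> 1"
    by (simp_all add: recovery_set_iff[OF assms(1,2)])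
  moreover have "0 \<le> snorm ipS (tr (u - u0))"
    using nonneg \<open>u - u0 \<in> harmonics\<close> mem_harmonics_iff by (simp add: snorm_def)
  ultimately have "norm (u - u0) \<le> \<bar>Cs\<bar>"
    using Cs[of "u - u0"] by (smt (verit) mult_left_le mult_right_mono abs_ge_self abs_ge_zero)
  then show "u \<in> cball u0 \<bar>Cs\<bar>" by (simp add: dist_norm norm_minus_commute)
qed

lemma dist_le_cheb_radius_recovery_set:
  assumes "lap u0 = f" "tr u0 = 0"
    and "\<And>v. v \<in> harmonics \<Longrightarrow> norm v \<le> Cs * snorm ipS (tr v)"
    and "gram *v a = w - (\<chi> j. lam j u0)" and "u \<in> recovery_set f w"
  shows "dist u (u0 + phi_comb a) \<le> cheb_radius (recovery_set f w)"
  using assms recovery_set_symmetric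
  by (intro dist_le_cheb_radius_if_symmetric
      bounded_subset[OF bounded_cball recovery_set_subset_cball]) auto

lemma bound_constants_pos:
  assumes "\<And>j v. \<bar>lam j v\<bar> \<le> Lam * norm v"
    and "\<And>v. v \<in> harmonics \<Longrightarrow> norm v \<le> Cs * snorm ipS (tr v)"
  shows "0 < Lam" and "0 < Cs"
proof -
  obtain v j where v: "v \<in> harmonics" "lam j v \<noteq> 0"
    using exists_harmonic_lam_nonzero by blast
  then have "0 < norm v" using linear_0[OF lam_linear] by fastforce
  moreover have "0 < Lam * norm v"
    using assms(1)[of j v] v(2) by linarith
  ultimately show "0 < Lam" by (simp add: zero_less_mult_iff)
  have "0 \<le> snorm ipS (tr v)"
    using nonneg v(1) mem_harmonics_iff by (simp add: snorm_def)
  with assms(2)[OF v(1)] \<open>0 < norm v\<close> show "0 < Cs"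
    by (smt (verit) mult_nonpos_nonneg)
qed

lemma l1n_data_le:
  assumes "lap u0 = f" "tr u0 = 0" and "u \<in> recovery_set f w"
    and "\<And>j v. \<bar>lam j v\<bar> \<le> Lam * norm v" "0 \<le> Lam"
    and "\<And>v. v \<in> harmonics \<Longrightarrow> norm v \<le> Cs * snorm ipS (tr v)"
  shows "l1n (w - (\<chi> j. lam j u0)) \<le> real CARD('m) * (Lam * \<bar>Cs\<bar>)"
proof (rule l1n_le_card_mult)
  fix j
  have "norm (u - u0) \<le> \<bar>Cs\<bar>"
    using subsetD[OF recovery_set_subset_cball[OF assms(1,2,6)] assms(3)]
    by (simp add: dist_norm norm_minus_commute)
  moreover have "(w - (\<chi> j. lam j u0)) $ j = lam j (u - u0)"
    using assms(3) recovery_set_iff[OF assms(1,2)] by simp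
  ultimately show "\<bar>(w - (\<chi> j. lam j u0)) $ j\<bar> \<le> Lam * \<bar>Cs\<bar>"
    using assms(4)[of j "u - u0"] mult_left_mono[of _ _ Lam] assms(5) by (metis order_trans)
qed

end

theorem mainTheorem1:
  fixes lap :: "'h::{real_inner,complete_space} \<Rightarrow> 'd::real_vector"
    and tr :: "'h \<Rightarrow> 'b::real_vector"
    and Hs :: "'b set"
    and ipS :: "'b \<Rightarrow> 'b \<Rightarrow> real"
    and f :: 'd
    and u0 :: 'h
    and lam :: "'m::finite \<Rightarrow> 'h \<Rightarrow> real"
    and Lam Cs :: real
    and phi :: "'m \<Rightarrow> 'h"
    and w :: "real^'m"
    and eps eps1 eps2 :: real
    and u0hat :: 'h
    and phihat :: "'m \<Rightarrow> 'h"
    and V :: "'h set" and Kw :: "'h set"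
    and m M C0 Lams delta :: real
    and G Ghat :: "real^'m^'m"
    and what :: "real^'m"
  assumes lap_lin: "linear lap"
    and def0: "V = harm_space lap tr Hs"
    and def1: "m = real CARD('m)"
    and def2: "G = (\<chi> i j. ipS (tr (phi i)) (tr (phi j)))"
    and def3: "M = l1_opnorm (matrix_inv G)"
    and def4: "C0 = Max (range (\<lambda>j. norm (phi j)))"
    and def5: "Lams = Cs * Lam"
    and def6: "delta = M\<^sup>2 / (1 - m * M * Lam * eps2) * (m * Lam * eps2)"
    and def7: "Kw = {u \<in> Kset lap tr Hs ipS f. (\<chi> j. lam j u) = w}"
    and def8: "Ghat = (\<chi> i j. lam j (phihat i))"
    and def9: "what = w - (\<chi> j. lam j u0hat)"
    and tr_lin: "linear tr"
    and Hs_sub: "subspace Hs"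
    and ipS_sym: "\<forall>g\<in>Hs. \<forall>h\<in>Hs. ipS g h = ipS h g"
    and ipS_add: "\<forall>g\<in>Hs. \<forall>h\<in>Hs. \<forall>k\<in>Hs. ipS (g + h) k = ipS g k + ipS h k"
    and ipS_scale: "\<forall>g\<in>Hs. \<forall>h\<in>Hs. \<forall>c. ipS (c *\<^sub>R g) h = c * ipS g h"
    and ipS_pos: "\<forall>g\<in>Hs. 0 \<le> ipS g g"
    and ipS_definite: "\<forall>g\<in>Hs. ipS g g = 0 \<longrightarrow> g = 0"
    and Cs_bound: "\<forall>v\<in>V. norm v \<le> Cs * snorm ipS (tr v)"
    and u0_eq: "lap u0 = f" and u0_bdry: "tr u0 = 0"
    and lam_lin: "\<forall>j. bounded_linear (lam j)"
    and lam_bound: "\<forall>j v. \<bar>lam j v\<bar> \<le> Lam * norm v"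
    and lam_indep: "\<forall>c::real^'m. (\<forall>v\<in>V. (\<Sum>j\<in>UNIV. c $ j * lam j v) = 0) \<longrightarrow> c = 0"
    and riesz: "\<forall>j. phi j \<in> V \<and> (\<forall>v\<in>V. lam j v = ipS (tr v) (tr (phi j)))"
    and eps_pos: "eps > 0" and eps1_pos: "eps1 > 0" and eps2_pos: "eps2 > 0"
    and small: "m * M * Lam * eps2 < 1"
    and tol: "eps1 + m * M * Lams * eps2
              + (C0 + eps2) * (m * M * Lam * eps1 + m * (Lams + Lam * eps1) * delta) \<le> eps"
    and Kw_ne: "Kw \<noteq> {}"
    and u0hat_close: "norm (u0 - u0hat) \<le> eps1"
    and phihat_close: "\<forall>j. norm (phi j - phihat j) \<le> eps2"
  shows "invertible Ghat \<and>
         (\<forall>a. Ghat *v a = what \<longrightarrow>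
            (\<forall>u\<in>Kw. norm (u - (u0hat + (\<Sum>j\<in>UNIV. a $ j *\<^sub>R phihat j)))
                      \<le> cheb_radius Kw + eps))"
proof -
  interpret harmonic_recovery Hs ipS lap tr lam phi
    using Hs_sub ipS_sym ipS_add ipS_scale ipS_pos ipS_definite lap_lin tr_lin riesz lam_indep
      lam_lin[rule_format, THEN bounded_linear.linear]
    by (intro harmonic_recovery.intro inner_product_on.intro harmonic_recovery_axioms.intro)
      (simp_all add: def0 [symmetric])
  have Kw: "Kw = recovery_set f w" by (simp add: def7 recovery_set_def)
  have lam_le: "\<And>j v. \<bar>lam j v\<bar> \<le> Lam * norm v" using lam_bound by blast
  have harmonic_norm_le: "\<And>v. v \<in> harmonics \<Longrightarrow> norm v \<le> Cs * snorm ipS (tr v)"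
    using Cs_bound def0 by blast
  note Lam_Cs_pos = bound_constants_pos[OF lam_le harmonic_norm_le]
  define astar where "astar = matrix_inv gram *v (w - (\<chi> j. lam j u0))"
  have astar: "gram *v astar = w - (\<chi> j. lam j u0)"
    by (simp add: astar_def matrix_vector_mul_assoc matrix_inv_inverse(2)[OF gram_invertible])
  have Ghat_nth: "\<And>i j. Ghat $ i $ j = lam j (phihat i)" by (simp add: def8)
  have M: "\<And>x. l1n x \<le> M * l1n (gram *v x)" "0 \<le> M"
    using l1n_le_l1_opnorm_inv[OF gram_invertible] l1_opnorm_nonneg by (simp_all add: def3 def2 gram_def)
  have phi_le_C0: "\<And>j. norm (phi j) \<le> C0" unfolding def4 by (rule Max_ge) auto
  from Kw_ne obtain uK where "uK \<in> recovery_set f w" by (auto simp: Kw)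
  then have "l1n (w - (\<chi> j. lam j u0)) \<le> m * Lams"
    using l1n_data_le[OF u0_eq u0_bdry _ lam_le _ harmonic_norm_le] Lam_Cs_pos
    by (simp add: def1 def5 mult.commute)
  then have "l1n astar \<le> M * (m * Lams)"
    using M(1)[of astar] mult_left_mono[OF _ M(2)] unfolding astar by (meson order_trans)
  note interpolant_error =
    perturbed_interpolant_error[OF lam_linear lam_le _ gram_nth Ghat_nth M astar this[unfolded def1]]
  have "invertible Ghat"
    using invertible_perturbed[OF M l1n_gram_perturbation[OF lam_linear lam_le _ gram_nth Ghat_nth
          phihat_close[rule_format]]] Lam_Cs_pos small
    by (simp add: def1 mult_ac)
  moreover have "norm (u - (u0hat + (\<Sum>j\<in>UNIV. a $ j *\<^sub>R phihat j))) \<le> cheb_radius Kw + eps"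
    if "Ghat *v a = what" "u \<in> Kw" for a u
  proof -
    have "dist u (u0 + phi_comb astar) \<le> cheb_radius Kw"
      using dist_le_cheb_radius_recovery_set[OF u0_eq u0_bdry harmonic_norm_le astar] that(2)
      by (simp add: Kw)
    moreover have "norm ((u0 + phi_comb astar) - (u0hat + (\<Sum>j\<in>UNIV. a $ j *\<^sub>R phihat j))) \<le> eps"
      unfolding phi_comb_def
      using interpolant_error[OF _ _ u0hat_close phihat_close[rule_format] phi_le_C0 _
          small[unfolded def1] def6[unfolded def1] tol[unfolded def1]]
        Lam_Cs_pos that(1) def9 eps2_pos
      by simp
    ultimately show ?thesis
      by (intro norm_diff_triangle_le) (simp_all add: dist_norm)
  qed
  ultimately show ?thesis by blast
qed

end
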